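(* Let $A>0$, $\phi>0$, $0<\gamma<1$, and $\alpha,\beta>0$ with $\alpha+\beta<1$. For $k,N>0$ define $n^*(k,N)=\frac{1-\alpha}{2\phi kN^{\gamma}}$ and $e^*(k,N)=\frac{\alpha}{1-\alpha}\phi k^{2}N^{\gamma}$, and the map $F_S(k,N)=\big(A\,e^*(k,N)^{\alpha}k^{\beta},\ n^*(k,N)N\big)$. Let $(\bar k,\bar N)$ be the unique fixed point of $F_S$ with $\bar k,\bar N>0$. Write $\bar e=e^*(\bar k,\bar N)$ and let $$E_k=\frac{\partial e^*}{\partial k}(\bar k,\bar N)=\frac{2\alpha\phi}{1-\alpha}\bar k\bar N^{\gamma},\quad E_N=\frac{\partial e^*}{\partial N}(\bar k,\bar N)=\frac{\alpha\gamma\phi}{1-\alpha}\bar k^{2}\bar N^{\gamma-1},$$ $$D_k=\frac{\partial n^*}{\partial k}(\bar k,\bar N)=-\frac{1-\alpha}{2\phi\bar k^{2}\bar N^{\gamma}},\quad D_N=\frac{\partial n^*}{\partial N}(\bar k,\bar N)=-\frac{\gamma(1-\alpha)}{2\phi\bar k\bar N^{\gamma+1}}.$$ Suppose $$1-\frac{\alpha\bar e^{\alpha-1}E_N\bar k^{\beta}D_k\bar N}{\alpha\bar e^{\alpha-1}E_k\bar k^{\beta}+\frac{\beta}{A}}-\frac{1}{A\alpha\bar e^{\alpha-1}E_k\bar k^{\beta}+\beta}<-D_N\bar N<1-\frac{A\alpha\bar e^{\alpha-1}E_N\bar k^{\beta}D_k\bar N}{1+A\alpha\bar e^{\alpha-1}E_k\bar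 k^{\beta}+\beta}$$ and $$A\alpha\bar e^{\alpha-1}E_k\bar k^{\beta}+\beta>1.$$ Then $(\bar k,\bar N)$ is locally asymptotically stable, i.e. both eigenvalues of the Jacobian matrix of $F_S$ at $(\bar k,\bar N)$ have modulus strictly less than $1$.
   Context: Overlapping-generations model with human capital $k_t$ and adult population $N_t$, in the case where parental childcare times are perfect substitutes; $n^*$ and $e^*$ are the household's optimal fertility and education spending and the dynamics are $(k_{t+1},N_{t+1})=F_S(k_t,N_t)$. The fixed point $(\bar k,\bar N)$ is $\bar k=(A^{1/\alpha}\alpha/2)^{\alpha/(1-\beta-\alpha)}$, $\bar N=\left(\frac{1-\alpha}{2\phi\bar k}\right)^{1/\gamma}$. *)

theory Defs
  imports "HOL-Analysis.Analysis"
begin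

definition nstar :: "real \<Rightarrow> real \<Rightarrow> real \<Rightarrow> real \<Rightarrow> real \<Rightarrow> real" where
  "nstar \<alpha> \<phi> \<gamma> k N = (1 - \<alpha>) / (2 * \<phi> * k * N powr \<gamma>)"

definition estar :: "real \<Rightarrow> real \<Rightarrow> real \<Rightarrow> real \<Rightarrow> real \<Rightarrow> real" where
  "estar \<alpha> \<phi> \<gamma> k N = \<alpha> / (1 - \<alpha>) * \<phi> * k\<^sup>2 * N powr \<gamma>"

definition FS :: "real \<Rightarrow> real \<Rightarrow> real \<Rightarrow> real \<Rightarrow> real \<Rightarrow> real^2 \<Rightarrow> real^2" where
  "FS A \<alpha> \<beta> \<phi> \<gamma> x =
     vector [A * (estar \<alpha> \<phi> \<gamma> (x$1) (x$2)) powr \<alpha> * (x$1) powr \<beta>,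
             nstar \<alpha> \<phi> \<gamma> (x$1) (x$2) * x$2]"

definition is_eigenvalue :: "complex^'n^'n \<Rightarrow> complex \<Rightarrow> bool" where
  "is_eigenvalue M c \<longleftrightarrow> (\<exists>v. v \<noteq> 0 \<and> M *v v = c *s v)"

definition complexify :: "real^'n^'m \<Rightarrow> complex^'n^'m" where
  "complexify M = (\<chi> i j. complex_of_real (M $ i $ j))"

end

theory Submission
  imports Defs
begin

text \<open>
  At a fixed point with \<open>N > 0\<close> we have \<open>n* = 1\<close>, i.e. \<open>2 \<phi> k N\<^sup>\<gamma> = 1 - \<alpha>\<close>, hence
  \<open>e* = \<alpha> k / 2\<close>. Both components of \<open>F\<^sub>S\<close> are products of powers of \<open>k\<close> and \<open>N\<close>, so
  the Jacobian entry \<open>(i, j)\<close> is the elasticity of \<open>F\<^sub>i\<close> with respect to \<open>x\<^sub>j\<close> times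
  \<open>F\<^sub>i / x\<^sub>j\<close>; at the fixed point it is \<open>[[2\<alpha> + \<beta>, \<alpha>\<gamma>k/N], [-N/k, 1 - \<gamma>]]\<close>,
  with trace \<open>T = 2\<alpha> + \<beta> + 1 - \<gamma>\<close> and determinant \<open>D = (2\<alpha> + \<beta>)(1 - \<gamma>) + \<alpha>\<gamma>\<close>.
  By the Jury conditions both eigenvalues lie in the open unit disc iff \<open>D < 1\<close>,
  \<open>1 - T + D > 0\<close> and \<open>1 + T + D > 0\<close>. The last two hold for all admissible parameters
  (\<open>1 - T + D = \<gamma>(1 - \<alpha> - \<beta>)\<close>), and the left inequality of the hypothesis \<open>cond1\<close>
  simplifies to \<open>D < 1\<close>.
\<close>

lemma quadratic_roots_in_unit_disc:
  fixes T D :: real and z :: complex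
  assumes root: "z\<^sup>2 - of_real T * z + of_real D = 0"
    and "D < 1" "1 - T + D > 0" "1 + T + D > 0"
  shows "cmod z < 1"
proof -
  obtain x y where z: "z = Complex x y"
    by (cases z)
  have re: "x\<^sup>2 - y\<^sup>2 - T * x + D = 0" and im: "(2 * x - T) * y = 0"
    using root unfolding z complex_eq_iff by (simp_all add: power2_eq_square algebra_simps)
  have "x\<^sup>2 + y\<^sup>2 < 1"
  proof (cases "y = 0")
    case True
    then have "x * (1 - T + D) = (1 - x) * (x - D)" and "x * (1 + T + D) = (1 + x) * (x + D)"
      using re by (simp_all add: power2_eq_square algebra_simps)
    moreover have "\<not> x \<ge> 1"
    proof
      assume "x \<ge> 1"
      then have "(1 - x) * (x - D) \<le> 0" and "x * (1 - T + D) > 0"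
        using assms(2,3) by (simp_all add: mult_nonpos_nonneg)
      with \<open>x * (1 - T + D) = (1 - x) * (x - D)\<close> show False
        by linarith
    qed
    moreover have "\<not> x \<le> -1"
    proof
      assume "x \<le> -1"
      then have "(1 + x) * (x + D) \<ge> 0" and "x * (1 + T + D) < 0"
        using assms(2,4) by (simp_all add: mult_nonpos_nonpos mult_neg_pos)
      with \<open>x * (1 + T + D) = (1 + x) * (x + D)\<close> show False
        by linarith
    qed
    ultimately have "\<bar>x\<bar> < 1"
      by linarith
    with True show ?thesis
      by (simp add: abs_square_less_1)
  next
    case False
    with im have "T = 2 * x"
      by simp
    with re have "x\<^sup>2 + y\<^sup>2 = D"
      by (simp add: power2_eq_square)
    with assms(2) show ?thesis
      by simp
  qed
  then show ?thesis
    unfolding z cmod_def by simp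
qed

lemma is_eigenvalue_imp_det_eq_0:
  fixes M :: "complex^'n^'n"
  assumes "is_eigenvalue M \<mu>"
  shows "det (M - mat \<mu>) = 0"
proof -
  obtain v where "v \<noteq> 0" "M *v v = \<mu> *s v"
    using assms unfolding is_eigenvalue_def by blast
  moreover have "mat \<mu> *v v = \<mu> *s v"
    by (simp add: vec_eq_iff matrix_vector_mult_def mat_def if_distrib[of "\<lambda>x. x * _"] cong: if_cong)
  ultimately have "(M - mat \<mu>) *v v = 0" "v \<noteq> 0"
    by (simp_all add: matrix_vector_mult_diff_rdistrib)
  then have "\<not> invertible (M - mat \<mu>)"
    unfolding invertible_left_inverse matrix_left_invertible_ker by blast
  then show ?thesis
    by (simp add: invertible_det_nz)
qed

lemma is_eigenvalue_complexify_char_poly_2: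
  fixes M :: "real^2^2"
  assumes "is_eigenvalue (complexify M) \<mu>"
  shows "\<mu>\<^sup>2 - of_real (trace M) * \<mu> + of_real (det M) = 0"
proof -
  have "det (complexify M - mat \<mu>) = 0"
    using assms by (rule is_eigenvalue_imp_det_eq_0)
  then show ?thesis
    by (simp add: det_2 trace_def sum_2 complexify_def mat_def algebra_simps power2_eq_square)
qed

lemma jacobian_eq_matrix:
  assumes "(f has_derivative f') (at x)"
  shows "jacobian f (at x) = matrix f'"
  using assms by (simp add: jacobian_def frechet_derivative_at[symmetric])

lemma has_derivative_vec_nth [derivative_intros]:
  "(f has_derivative f') F \<Longrightarrow> ((\<lambda>x. f x $ i) has_derivative (\<lambda>h. f' h $ i)) F"
  by (rule bounded_linear.has_derivative[OF bounded_linear_vec_nth])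

text \<open>The derivative rules do not apply to the list literal \<open>vector [a, b]\<close>, hence this form.\<close>

lemma vector_2_eq_sum_axis: "vector [a, b] = a *\<^sub>R axis 1 1 + b *\<^sub>R (axis 2 1 :: real^2)"
  by (simp add: vec_eq_iff forall_2 axis_def)

lemma FS_has_derivative:
  fixes x :: "real^2" and A \<alpha> \<beta> \<phi> \<gamma> :: real
  assumes "x$1 > 0" "x$2 > 0" "0 < \<alpha>" "\<alpha> < 1" "\<phi> > 0"
  defines "y \<equiv> FS A \<alpha> \<beta> \<phi> \<gamma> x"
  shows "(FS A \<alpha> \<beta> \<phi> \<gamma> has_derivative
           (\<lambda>h. vector [y$1 * ((2 * \<alpha> + \<beta>) * h$1 / x$1 + \<alpha> * \<gamma> * h$2 / x$2),
                         y$2 * ((1 - \<gamma>) * h$2 / x$2 - h$1 / x$1)])) (at x)"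
  unfolding FS_def vector_2_eq_sum_axis estar_def nstar_def y_def using assms
  by (auto intro!: derivative_eq_intros simp: fun_eq_iff vec_eq_iff forall_2 axis_def)
     (simp_all add: field_simps power2_eq_square)

lemma jacobian_FS:
  fixes x :: "real^2" and A \<alpha> \<beta> \<phi> \<gamma> :: real
  assumes "x$1 > 0" "x$2 > 0" "0 < \<alpha>" "\<alpha> < 1" "\<phi> > 0"
  defines "y \<equiv> FS A \<alpha> \<beta> \<phi> \<gamma> x"
  shows "jacobian (FS A \<alpha> \<beta> \<phi> \<gamma>) (at x) =
    vector [vector [(2 * \<alpha> + \<beta>) * y$1 / x$1, \<alpha> * \<gamma> * y$1 / x$2],
            vector [- y$2 / x$1, (1 - \<gamma>) * y$2 / x$2]]"
  unfolding jacobian_eq_matrix[OF FS_has_derivative[OF assms(1-5)]] y_def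
  by (simp add: matrix_def vec_eq_iff forall_2 axis_def)

lemma FS_fixed_pointD:
  fixes A \<alpha> \<beta> \<phi> \<gamma> k N :: real
  assumes "N \<noteq> 0" and "FS A \<alpha> \<beta> \<phi> \<gamma> (vector [k, N]) = vector [k, N]"
  shows "A * estar \<alpha> \<phi> \<gamma> k N powr \<alpha> * k powr \<beta> = k"
    and "2 * \<phi> * k * N powr \<gamma> = 1 - \<alpha>"
proof -
  show "A * estar \<alpha> \<phi> \<gamma> k N powr \<alpha> * k powr \<beta> = k"
    using assms(2) by (simp add: FS_def vec_eq_iff forall_2)
  have "nstar \<alpha> \<phi> \<gamma> k N * N = N"
    using assms(2) by (simp add: FS_def vec_eq_iff forall_2)
  then have "(1 - \<alpha>) / (2 * \<phi> * k * N powr \<gamma>) = 1"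
    using assms(1) unfolding nstar_def by (metis mult_cancel_right1)
  then show "2 * \<phi> * k * N powr \<gamma> = 1 - \<alpha>"
    by (simp add: divide_eq_1_iff)
qed

lemma estar_at_fixed_point:
  fixes \<alpha> \<phi> \<gamma> k N :: real
  assumes "2 * \<phi> * k * N powr \<gamma> = 1 - \<alpha>" and "\<alpha> \<noteq> 1"
  shows "estar \<alpha> \<phi> \<gamma> k N = \<alpha> * k / 2"
proof -
  have "estar \<alpha> \<phi> \<gamma> k N = \<alpha> * k / 2 * ((2 * \<phi> * k * N powr \<gamma>) / (1 - \<alpha>))"
    using assms(2) by (simp add: estar_def power2_eq_square field_simps)
  with assms show ?thesis
    by simp
qed

lemma estar_powr_at_fixed_point:
  fixes A \<alpha> \<beta> \<phi> \<gamma> k N :: real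
  assumes "A * estar \<alpha> \<phi> \<gamma> k N powr \<alpha> * k powr \<beta> = k"
    and "2 * \<phi> * k * N powr \<gamma> = 1 - \<alpha>" and "k > 0" and "0 < \<alpha>" "\<alpha> \<noteq> 1"
  shows "estar \<alpha> \<phi> \<gamma> k N powr (\<alpha> - 1) = 2 / (A * \<alpha> * k powr \<beta>)"
proof -
  define e where "e = estar \<alpha> \<phi> \<gamma> k N"
  have e: "e = \<alpha> * k / 2"
    unfolding e_def using assms(2,5) by (rule estar_at_fixed_point)
  have "e > 0"
    unfolding e using assms(3,4) by simp
  then have "A * \<alpha> * k powr \<beta> * e powr (\<alpha> - 1) = \<alpha> * (A * e powr \<alpha> * k powr \<beta>) / e"
    by (simp add: powr_diff)
  also have "\<dots> = \<alpha> * k / e"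
    using assms(1) by (simp only: e_def)
  also have "\<dots> = 2"
    using assms(3,4) unfolding e by simp
  finally have "A * \<alpha> * k powr \<beta> * e powr (\<alpha> - 1) = 2" .
  moreover from this have "A * \<alpha> * k powr \<beta> \<noteq> 0"
    by auto
  ultimately show ?thesis
    unfolding e_def by (simp add: eq_divide_eq mult.commute)
qed

lemma partial_derivatives_at_fixed_point:
  fixes \<alpha> \<phi> \<gamma> k N :: real
  assumes "2 * \<phi> * k * N powr \<gamma> = 1 - \<alpha>" and "\<alpha> \<noteq> 1" and "k > 0" and "N > 0"
  shows "2 * \<alpha> * \<phi> / (1 - \<alpha>) * k * N powr \<gamma> = \<alpha>"
    and "\<alpha> * \<gamma> * \<phi> / (1 - \<alpha>) * k\<^sup>2 * N powr (\<gamma> - 1) = \<alpha> * \<gamma> * k / (2 * N)"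
    and "- ((1 - \<alpha>) / (2 * \<phi> * k\<^sup>2 * N powr \<gamma>)) = - 1 / k"
    and "- (\<gamma> * (1 - \<alpha>) / (2 * \<phi> * k * N powr (\<gamma> + 1))) = - \<gamma> / N"
proof -
  have \<phi>: "\<phi> = (1 - \<alpha>) / (2 * k * N powr \<gamma>)"
    using assms(1,3,4) by (simp add: field_simps)
  show "2 * \<alpha> * \<phi> / (1 - \<alpha>) * k * N powr \<gamma> = \<alpha>"
    and "\<alpha> * \<gamma> * \<phi> / (1 - \<alpha>) * k\<^sup>2 * N powr (\<gamma> - 1) = \<alpha> * \<gamma> * k / (2 * N)"
    and "- ((1 - \<alpha>) / (2 * \<phi> * k\<^sup>2 * N powr \<gamma>)) = - 1 / k"
    and "- (\<gamma> * (1 - \<alpha>) / (2 * \<phi> * k * N powr (\<gamma> + 1))) = - \<gamma> / N"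
    using assms(2-4) unfolding \<phi> by (simp_all add: powr_diff powr_add power2_eq_square field_simps)
qed

lemma eigenvalues_FS_jacobian_in_unit_disc:
  fixes \<alpha> \<beta> \<gamma> k N :: real and \<mu> :: complex
  defines "s \<equiv> 2 * \<alpha> + \<beta>"
  assumes eig: "is_eigenvalue (complexify
      (vector [vector [s, \<alpha> * \<gamma> * k / N], vector [- N / k, 1 - \<gamma>]] :: real^2^2)) \<mu>"
    and det_lt_1: "s * (1 - \<gamma>) + \<alpha> * \<gamma> < 1"
    and h\<gamma>: "0 < \<gamma>" "\<gamma> < 1" and h\<alpha>: "0 < \<alpha>" and h\<beta>: "0 < \<beta>" and h\<alpha>\<beta>: "\<alpha> + \<beta> < 1"
    and hk: "k > 0" and hN: "N > 0"
  shows "cmod \<mu> < 1"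
proof -
  have "\<mu>\<^sup>2 - of_real (s + (1 - \<gamma>)) * \<mu> + of_real (s * (1 - \<gamma>) + \<alpha> * \<gamma>) = 0"
    using is_eigenvalue_complexify_char_poly_2[OF eig] hk hN
    by (simp add: trace_def sum_2 det_2)
  then show ?thesis
  proof (rule quadratic_roots_in_unit_disc)
    show "s * (1 - \<gamma>) + \<alpha> * \<gamma> < 1"
      by (fact det_lt_1)
    have "\<gamma> * (1 - \<alpha> - \<beta>) > 0"
      using h\<gamma> h\<alpha>\<beta> by simp
    then show "1 - (s + (1 - \<gamma>)) + (s * (1 - \<gamma>) + \<alpha> * \<gamma>) > 0"
      by (simp add: s_def algebra_simps)
    have "s > 0" "s * (1 - \<gamma>) > 0" "\<alpha> * \<gamma> > 0"
      using h\<gamma> h\<alpha> h\<beta> by (simp_all add: s_def)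
    then show "1 + (s + (1 - \<gamma>)) + (s * (1 - \<gamma>) + \<alpha> * \<gamma>) > 0"
      using h\<gamma> by linarith
  qed
qed

theorem proposition2:
  fixes A \<phi> \<gamma> \<alpha> \<beta> kb Nb :: real
  assumes hA: "A > 0" and h\<phi>: "\<phi> > 0" and h\<gamma>: "0 < \<gamma>" "\<gamma> < 1"
    and h\<alpha>: "\<alpha> > 0" and h\<beta>: "\<beta> > 0" and h\<alpha>\<beta>: "\<alpha> + \<beta> < 1"
    and hkb: "kb > 0" and hNb: "Nb > 0"
    and hfix: "FS A \<alpha> \<beta> \<phi> \<gamma> (vector [kb, Nb]) = vector [kb, Nb]"
    and cond1:
      "let eb = estar \<alpha> \<phi> \<gamma> kb Nb;
           Ek = 2 * \<alpha> * \<phi> / (1 - \<alpha>) * kb * Nb powr \<gamma>;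
           EN = \<alpha> * \<gamma> * \<phi> / (1 - \<alpha>) * kb\<^sup>2 * Nb powr (\<gamma> - 1);
           Dk = - ((1 - \<alpha>) / (2 * \<phi> * kb\<^sup>2 * Nb powr \<gamma>));
           DN = - (\<gamma> * (1 - \<alpha>) / (2 * \<phi> * kb * Nb powr (\<gamma> + 1)))
       in 1 - (\<alpha> * eb powr (\<alpha> - 1) * EN * kb powr \<beta> * Dk * Nb)
                / (\<alpha> * eb powr (\<alpha> - 1) * Ek * kb powr \<beta> + \<beta> / A)
            - 1 / (A * \<alpha> * eb powr (\<alpha> - 1) * Ek * kb powr \<beta> + \<beta>)
          < - DN * Nb
        \<and> - DN * Nb
          < 1 - (A * \<alpha> * eb powr (\<alpha> - 1) * EN * kb powr \<beta> * Dk * Nb)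
                / (1 + A * \<alpha> * eb powr (\<alpha> - 1) * Ek * kb powr \<beta> + \<beta>)"
    and cond2:
      "let eb = estar \<alpha> \<phi> \<gamma> kb Nb;
           Ek = 2 * \<alpha> * \<phi> / (1 - \<alpha>) * kb * Nb powr \<gamma>
       in A * \<alpha> * eb powr (\<alpha> - 1) * Ek * kb powr \<beta> + \<beta> > 1"
  shows "\<forall>\<mu>. is_eigenvalue (complexify (jacobian (FS A \<alpha> \<beta> \<phi> \<gamma>) (at (vector [kb, Nb])))) \<mu>
              \<longrightarrow> cmod \<mu> < 1"
proof (intro allI impI)
  fix \<mu>
  let ?x = "vector [kb, Nb] :: real^2"
  define s where "s = 2 * \<alpha> + \<beta>"
  assume eig: "is_eigenvalue (complexify (jacobian (FS A \<alpha> \<beta> \<phi> \<gamma>) (at ?x))) \<mu>"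
  have "\<alpha> < 1" "\<alpha> \<noteq> 1"
    using h\<beta> h\<alpha>\<beta> by linarith+
  have hk: "A * estar \<alpha> \<phi> \<gamma> kb Nb powr \<alpha> * kb powr \<beta> = kb"
    and hN: "2 * \<phi> * kb * Nb powr \<gamma> = 1 - \<alpha>"
    using FS_fixed_pointD[OF _ hfix] hNb by auto
  have "1 + \<alpha> * \<gamma> / s - 1 / s < \<gamma>"
    using cond1 hkb hNb hA h\<alpha> h\<beta>
    unfolding Let_def estar_powr_at_fixed_point[OF hk hN hkb h\<alpha> \<open>\<alpha> \<noteq> 1\<close>]
      partial_derivatives_at_fixed_point[OF hN \<open>\<alpha> \<noteq> 1\<close> hkb hNb]
    by (simp add: s_def field_simps)
  moreover have "s > 0"
    using h\<alpha> h\<beta> by (simp add: s_def)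
  ultimately have "s * (1 - \<gamma>) + \<alpha> * \<gamma> < 1"
    by (simp add: field_simps flip: diff_divide_distrib)
  moreover have "jacobian (FS A \<alpha> \<beta> \<phi> \<gamma>) (at ?x) =
      vector [vector [s, \<alpha> * \<gamma> * kb / Nb], vector [- Nb / kb, 1 - \<gamma>]]"
    using jacobian_FS[of ?x, OF _ _ h\<alpha> \<open>\<alpha> < 1\<close> h\<phi>] hfix hkb hNb by (simp add: s_def)
  ultimately show "cmod \<mu> < 1"
    using eigenvalues_FS_jacobian_in_unit_disc eig h\<gamma> h\<alpha> h\<beta> h\<alpha>\<beta> hkb hNb
    unfolding s_def by metis
qed

end
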